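(* Let $\rho_0\in L^\infty$ be supported in $\overline{B_1}$ and let $\rho$ be the corresponding solution. If $\lim_{t\to\infty}\mathcal G(\rho(t,\cdot))=0$ for every accuracy parameter $\kappa\in(0,1)$, then $\rho(t,\cdot)\rightharpoonup0$ weakly in $L^2(B_1)$ as $t\to\infty$.
   Context: $B_1\subset\mathbb R^2$ open unit disk, $B_\varepsilon(x)$ open disk of radius $\varepsilon$ at $x$, polar coordinates $(r,\theta)$. Velocity $u(r,\theta)=2\pi r^2(\sin\theta,-\cos\theta)$; $\rho(t,\cdot)$ solves $\partial_t\rho+\operatorname{div}(u\rho)=0$, $\rho(0)=\rho_0$, explicitly $\rho(t,r,\theta)=\rho_0(r,\theta+2\pi tr)$, so $\|\rho(t)\|_{L^\infty}=\|\rho_0\|_{L^\infty}$. Geometric mixing scale with accuracy $\kappa$: for bounded $f$ supported in $\overline{B_1}$ (extended by zero), $\mathcal G(f)$ (depending on $\kappa$) is the infimum of $\varepsilon>0$ with $\big|\frac1{|B_\varepsilon|}\int_{B_\varepsilon(x)}f\big|\le\kappa\|f\|_{L^\infty(B_1)}$ for all $x\in\mathbb R^2$. *)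

theory Defs
  imports "HOL-Analysis.Analysis"
begin

text \<open>We identify \<open>\<real>\<^sup>2\<close> with \<open>\<complex>\<close>; a point with polar coordinates (r, theta)
  is \<open>r * cis theta\<close>.  The explicit solution
  \<open>rho(t,r,theta) = rho0(r, theta + 2 pi t r)\<close> is then
  \<open>rho(t,x) = rho0(x * cis(2 pi t |x|))\<close>.\<close>

definition sol :: "(complex \<Rightarrow> real) \<Rightarrow> real \<Rightarrow> complex \<Rightarrow> real" where
  "sol rho0 t x = rho0 (x * cis (2 * pi * t * norm x))"

definition Linf_B1 :: "(complex \<Rightarrow> real) \<Rightarrow> real" where
  "Linf_B1 f = Inf {C. AE x in lborel. x \<in> ball 0 1 \<longrightarrow> \<bar>f x\<bar> \<le> C}"

text \<open>Geometric mixing scale with accuracy \<open>\<kappa>\<close>; \<open>f\<close> is extended by zero outside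
  the closed unit disk.\<close>
definition mix_scale :: "real \<Rightarrow> (complex \<Rightarrow> real) \<Rightarrow> real" where
  "mix_scale \<kappa> f = Inf {\<epsilon>. \<epsilon> > 0 \<and> (\<forall>x. \<bar>(1 / measure lborel (ball x \<epsilon>)) *
       (LINT y:ball x \<epsilon>|lborel. indicator (cball 0 1) y * f y)\<bar> \<le> \<kappa> * Linf_B1 f)}"

end

theory Submission
  imports Defs
begin

text \<open>The flow rotates each circle \<open>|x| = r\<close> rigidly, so it maps null sets to null sets
  and \<open>\<rho>(t)\<close> stays bounded by the bound of \<open>\<rho>\<^sub>0\<close>. A small mixing scale at accuracy
  \<open>\<kappa>\<close> provides a small radius \<open>\<epsilon>\<close> at which every average of \<open>\<rho>(t)\<close> over an
  \<open>\<epsilon>\<close>-ball is at most \<open>\<kappa> \<parallel>\<rho>\<^sub>0\<parallel>\<^sub>\<infinity>\<close>. For a continuous test function \<open>h\<close>, Fubini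
  writes \<open>|B\<^sub>\<epsilon>| \<integral> \<rho>(t) h\<close> as the integral over all centres \<open>x\<close> of the \<open>\<epsilon>\<close>-ball
  integrals of \<open>\<rho>(t) h\<close>; freezing \<open>h\<close> at \<open>x\<close> costs only the oscillation of \<open>h\<close> at
  scale \<open>\<epsilon>\<close>, and the frozen term is at most \<open>\<kappa> \<parallel>\<rho>\<^sub>0\<parallel>\<^sub>\<infinity> |B\<^sub>\<epsilon>| \<integral> |h|\<close>.
  Hence \<open>\<integral> \<rho>(t) h \<rightarrow> 0\<close>, and the case of \<open>g \<in> L\<^sup>2(B\<^sub>1) \<subseteq> L\<^sup>1(B\<^sub>1)\<close> follows
  because continuous functions are dense in \<open>L\<^sup>1\<close>.\<close>

lemma integrable_bounded_by_indicator:
  fixes g :: "'a \<Rightarrow> real"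
  assumes "g \<in> borel_measurable M" "A \<in> sets M" "emeasure M A < \<infinity>"
    and "\<And>x. x \<in> space M \<Longrightarrow> \<bar>g x\<bar> \<le> B * indicator A x"
  shows "integrable M g"
proof (rule Bochner_Integration.integrable_bound)
  show "integrable M (\<lambda>x. B * indicator A x)"
    using assms by (intro integrable_mult_right integrable_real_indicator) auto
  show "AE x in M. norm (g x) \<le> norm (B * indicator A x)"
    using assms(4) by (intro AE_I2) (smt (verit) real_norm_def)
qed (use assms in auto)

lemma integrable_mult_continuous_compact_support:
  fixes F h :: "'a::euclidean_space \<Rightarrow> real"
  assumes F [measurable]: "F \<in> borel_measurable lborel"
    and F_bound: "\<And>y. \<bar>F y\<bar> \<le> M" and F_supp: "\<And>y. y \<notin> S \<Longrightarrow> F y = 0"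
    and "compact S" and h: "continuous_on UNIV h"
  shows "integrable lborel (\<lambda>y. F y * h y)"
proof (rule Bochner_Integration.integrable_bound)
  show "integrable lborel (\<lambda>y. M * (indicator S y *\<^sub>R \<bar>h y\<bar>))"
    using assms(4) continuous_on_subset[OF h]
    by (intro integrable_mult_right borel_integrable_compact continuous_on_rabs) auto
  have "\<bar>F y * h y\<bar> \<le> M * (indicator S y * \<bar>h y\<bar>)" for y
    using F_bound[of y] F_supp[of y] by (cases "y \<in> S") (auto simp: abs_mult mult_right_mono)
  then show "AE y in lborel. norm (F y * h y) \<le> norm (M * (indicator S y *\<^sub>R \<bar>h y\<bar>))"
    by (intro AE_I2) (simp add: order_trans[OF _ abs_ge_self])
  show "(\<lambda>y. F y * h y) \<in> borel_measurable lborel"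
    using borel_measurable_continuous_onI[OF h] by simp
qed

lemma abs_le_one_plus_square: "\<bar>a::real\<bar> \<le> 1 + a\<^sup>2"
  using zero_le_power2[of "\<bar>a\<bar> - 1"] by (simp add: power2_diff)

lemma integrable_indicator_mult_if_square_integrable:
  fixes g :: "'a::euclidean_space \<Rightarrow> real"
  assumes "g \<in> borel_measurable lborel" "set_integrable lborel A (\<lambda>x. (g x)\<^sup>2)"
    and "A \<in> sets lborel" "emeasure lborel A < \<infinity>"
  shows "integrable lborel (\<lambda>x. indicator A x * g x)"
proof (rule Bochner_Integration.integrable_bound)
  show "integrable lborel (\<lambda>x. indicator A x + indicator A x * (g x)\<^sup>2 :: real)"
    using assms(2-4) unfolding set_integrable_def by (intro Bochner_Integration.integrable_add) auto
  show "AE x in lborel. norm (indicator A x * g x) \<le> norm (indicator A x + indicator A x * (g x)\<^sup>2 :: real)"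
    using abs_le_one_plus_square by (intro AE_I2) (auto simp: indicator_def)
qed (use assms(1,3) in simp)

lemma abs_integral_mult_le_approx:
  fixes F G h :: "'a \<Rightarrow> real"
  assumes [measurable]: "F \<in> borel_measurable M"
    and F_bound: "\<And>y. y \<in> space M \<Longrightarrow> \<bar>F y\<bar> \<le> B"
    and Fh: "integrable M (\<lambda>y. F y * h y)" and Gh: "integrable M (\<lambda>y. G y - h y)"
  shows "\<bar>\<integral>y. F y * G y \<partial>M\<bar> \<le> \<bar>\<integral>y. F y * h y \<partial>M\<bar> + B * (\<integral>y. \<bar>G y - h y\<bar> \<partial>M)"
proof -
  have [measurable]: "(\<lambda>y. G y - h y) \<in> borel_measurable M"
    using Gh by simp
  have bound: "\<bar>F y * (G y - h y)\<bar> \<le> B * \<bar>G y - h y\<bar>" if "y \<in> space M" for y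
    using F_bound[OF that] by (simp add: abs_mult mult_right_mono)
  have FGh: "integrable M (\<lambda>y. F y * (G y - h y))"
  proof (rule Bochner_Integration.integrable_bound[where f="\<lambda>y. B * \<bar>G y - h y\<bar>"])
    show "integrable M (\<lambda>y. B * \<bar>G y - h y\<bar>)"
      using Gh by simp
    show "AE y in M. norm (F y * (G y - h y)) \<le> norm (B * \<bar>G y - h y\<bar>)"
    proof (rule AE_I2)
      fix y assume "y \<in> space M"
      with bound show "norm (F y * (G y - h y)) \<le> norm (B * \<bar>G y - h y\<bar>)"
        unfolding real_norm_def using abs_ge_self order_trans by blast
    qed
  qed simp
  have "(\<lambda>y. F y * G y) = (\<lambda>y. F y * h y + F y * (G y - h y))"
    by (simp add: algebra_simps)
  then have "\<bar>\<integral>y. F y * G y \<partial>M\<bar> = \<bar>(\<integral>y. F y * h y \<partial>M) + (\<integral>y. F y * (G y - h y) \<partial>M)\<bar>"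
    using Fh FGh by simp
  moreover have "\<bar>\<integral>y. F y * (G y - h y) \<partial>M\<bar> \<le> (\<integral>y. \<bar>F y * (G y - h y)\<bar> \<partial>M)"
    using integral_norm_bound[of M "\<lambda>y. F y * (G y - h y)"] by simp
  moreover have "\<dots> \<le> (\<integral>y. B * \<bar>G y - h y\<bar> \<partial>M)"
    by (rule Bochner_Integration.integral_mono) (use FGh Gh bound in auto)
  moreover have "(\<integral>y. B * \<bar>G y - h y\<bar> \<partial>M) = B * (\<integral>y. \<bar>G y - h y\<bar> \<partial>M)"
    by simp
  ultimately show ?thesis
    using abs_triangle_ineq[of "\<integral>y. F y * h y \<partial>M" "\<integral>y. F y * (G y - h y) \<partial>M"] by linarith
qed

lemma tendsto_zero_if_eventually_abs_le_mult:
  fixes f :: "'a \<Rightarrow> real"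
  assumes "\<And>e. 0 < e \<Longrightarrow> e < 1 \<Longrightarrow> eventually (\<lambda>t. \<bar>f t\<bar> \<le> C * e) F"
  shows "(f \<longlongrightarrow> 0) F"
proof (rule tendstoI)
  fix d :: real assume "0 < d"
  define e where "e = min (1 / 2) (d / (2 * (\<bar>C\<bar> + 1)))"
  have e: "0 < e" "e < 1"
    using \<open>0 < d\<close> by (auto simp: e_def)
  have "C * e \<le> (\<bar>C\<bar> + 1) * (d / (2 * (\<bar>C\<bar> + 1)))"
    using e by (intro mult_mono) (auto simp: e_def)
  also have "\<dots> < d"
    using \<open>0 < d\<close> by (simp add: field_simps add_pos_nonneg)
  finally have "C * e < d" .
  with assms[OF e] show "eventually (\<lambda>t. dist (f t) 0 < d) F"
    by (auto elim!: eventually_mono)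
qed

section \<open>Density of continuous functions in L1\<close>

definition L1_limit_of_continuous :: "('a::euclidean_space \<Rightarrow> real) \<Rightarrow> bool" where
  "L1_limit_of_continuous g \<longleftrightarrow>
     (\<forall>e>0. \<exists>h. continuous_on UNIV h \<and> integrable lborel (\<lambda>x. g x - h x) \<and> (LINT x|lborel. \<bar>g x - h x\<bar>) < e)"

lemma lborel_closed_open_approx:
  fixes A :: "'a::euclidean_space set"
  assumes "A \<in> sets lborel" "0 < d"
  obtains K U where "closed K" "open U" "K \<subseteq> A" "A \<subseteq> U" "emeasure lborel (U - K) < ennreal d"
proof -
  have A: "A \<in> sets lebesgue"
    using assms(1) by simp
  obtain U where U: "open U" "A \<subseteq> U" "U - A \<in> lmeasurable" "emeasure lebesgue (U - A) < ennreal (d / 2)"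
    using sets_lebesgue_outer_open[OF A, of "d / 2"] assms(2) by auto
  obtain K where K: "closed K" "K \<subseteq> A" "A - K \<in> lmeasurable" "emeasure lebesgue (A - K) < ennreal (d / 2)"
    using sets_lebesgue_inner_closed[OF A, of "d / 2"] assms(2) by auto
  have "U - K = (U - A) \<union> (A - K)"
    using K(2) U(2) by auto
  then have "emeasure lebesgue (U - K) \<le> emeasure lebesgue (U - A) + emeasure lebesgue (A - K)"
    using U(3) K(3) by (metis emeasure_subadditive fmeasurableD)
  also have "\<dots> < ennreal d"
    using U(4) K(4) assms(2) ennreal_plus[of "d / 2" "d / 2"] add_strict_mono by fastforce
  finally have "emeasure lborel (U - K) < ennreal d"
    using U(1) K(1) by (simp add: emeasure_completion)
  then show ?thesis
    by (rule that[OF K(1) U(1) K(2) U(2)])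
qed

lemma L1_limit_of_continuous_indicator:
  fixes A :: "'a::euclidean_space set"
  assumes A: "A \<in> sets lborel" "emeasure lborel A < \<infinity>"
  shows "L1_limit_of_continuous (\<lambda>x. indicator A x * c)"
  unfolding L1_limit_of_continuous_def
proof (intro allI impI)
  fix e :: real assume "0 < e"
  define d where "d = e / (\<bar>c\<bar> + 1)"
  have "0 < d"
    using \<open>0 < e\<close> by (simp add: d_def)
  obtain K U where KU: "closed K" "open U" "K \<subseteq> A" "A \<subseteq> U"
    and UK_small: "emeasure lborel (U - K) < ennreal d"
    by (rule lborel_closed_open_approx[OF A(1) \<open>0 < d\<close>])
  obtain u :: "'a \<Rightarrow> real" where u: "continuous_on UNIV u" "\<And>x. u x \<in> closed_segment 1 0"
      "\<And>x. x \<in> K \<Longrightarrow> u x = 1" "\<And>x. x \<in> - U \<Longrightarrow> u x = 0"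
    using Urysohn[of K "- U" 1 0] KU by auto
  have UK [measurable]: "U - K \<in> sets lborel"
    using KU by auto
  have UK_finite: "emeasure lborel (U - K) < \<infinity>"
    by (rule order.strict_trans[OF UK_small]) simp
  with UK_small have "measure lborel (U - K) < d"
    by (simp add: measure_def)
  have diff: "\<bar>indicator A x * c - c * u x\<bar> \<le> \<bar>c\<bar> * indicator (U - K) x" for x
  proof -
    have "\<bar>indicator A x - u x\<bar> \<le> indicator (U - K) x"
      using u(2-4)[of x] KU by (auto simp: indicator_def closed_segment_eq_real_ivl)
    then have "\<bar>c\<bar> * \<bar>indicator A x - u x\<bar> \<le> \<bar>c\<bar> * indicator (U - K) x"
      by (rule mult_left_mono) simp
    moreover have "\<bar>indicator A x * c - c * u x\<bar> = \<bar>c\<bar> * \<bar>indicator A x - u x\<bar>"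
      by (simp add: abs_mult flip: right_diff_distrib mult.commute[of c])
    ultimately show ?thesis
      by simp
  qed
  have u_meas: "u \<in> borel_measurable lborel"
    using borel_measurable_continuous_onI[OF u(1)] by simp
  have int: "integrable lborel (\<lambda>x. indicator A x * c - c * u x)"
    by (rule integrable_bounded_by_indicator[OF _ UK UK_finite diff]) (use u_meas A in simp)
  have "(LINT x|lborel. \<bar>indicator A x * c - c * u x\<bar>) \<le> (LINT x|lborel. \<bar>c\<bar> * indicator (U - K) x)"
    by (rule Bochner_Integration.integral_mono)
      (use int integrable_real_indicator[OF UK UK_finite] diff in auto)
  also have "\<dots> = \<bar>c\<bar> * measure lborel (U - K)"
    using UK_finite by simp
  also have "\<dots> \<le> \<bar>c\<bar> * d"
    using \<open>measure lborel (U - K) < d\<close> by (intro mult_left_mono) auto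
  also have "\<dots> < e"
    using \<open>0 < e\<close> by (simp add: d_def field_simps)
  finally show "\<exists>h. continuous_on UNIV h \<and> integrable lborel (\<lambda>x. indicator A x * c - h x) \<and>
      (LINT x|lborel. \<bar>indicator A x * c - h x\<bar>) < e"
    using int u(1) by (intro exI[of _ "\<lambda>x. c * u x"]) (auto intro: continuous_intros)
qed

lemma L1_limit_of_continuous_add:
  assumes "L1_limit_of_continuous f" "L1_limit_of_continuous g"
  shows "L1_limit_of_continuous (\<lambda>x. f x + g x)"
  unfolding L1_limit_of_continuous_def
proof (intro allI impI)
  fix e :: real assume "0 < e"
  obtain h1 where h1: "continuous_on UNIV h1" "integrable lborel (\<lambda>x. f x - h1 x)"
      "(LINT x|lborel. \<bar>f x - h1 x\<bar>) < e / 2"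
    using assms(1) \<open>0 < e\<close> unfolding L1_limit_of_continuous_def by (meson half_gt_zero)
  obtain h2 where h2: "continuous_on UNIV h2" "integrable lborel (\<lambda>x. g x - h2 x)"
      "(LINT x|lborel. \<bar>g x - h2 x\<bar>) < e / 2"
    using assms(2) \<open>0 < e\<close> unfolding L1_limit_of_continuous_def by (meson half_gt_zero)
  have diff: "f x + g x - (h1 x + h2 x) = (f x - h1 x) + (g x - h2 x)" for x
    by simp
  have "(LINT x|lborel. \<bar>f x + g x - (h1 x + h2 x)\<bar>) \<le> (LINT x|lborel. \<bar>f x - h1 x\<bar> + \<bar>g x - h2 x\<bar>)"
    unfolding diff by (rule Bochner_Integration.integral_mono) (use h1(2) h2(2) in auto)
  also have "\<dots> < e"
    using h1(2,3) h2(2,3) by simp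
  finally show "\<exists>h. continuous_on UNIV h \<and> integrable lborel (\<lambda>x. f x + g x - h x) \<and>
      (LINT x|lborel. \<bar>f x + g x - h x\<bar>) < e"
    using h1 h2 by (intro exI[of _ "\<lambda>x. h1 x + h2 x"]) (auto simp: diff intro: continuous_intros)
qed

text \<open>The hypotheses are those of the limit case of \<open>integrable_induct\<close>.\<close>

lemma L1_limit_of_continuous_lim:
  fixes f :: "'a::euclidean_space \<Rightarrow> real"
  assumes s_int: "\<And>i. integrable lborel (s i)" and s: "\<And>i. L1_limit_of_continuous (s i)"
    and lim: "\<And>x. (\<lambda>i. s i x) \<longlonglongrightarrow> f x"
    and bound: "\<And>i x. \<bar>s i x\<bar> \<le> 2 * \<bar>f x\<bar>"
    and f_int: "integrable lborel f"
  shows "L1_limit_of_continuous f"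
  unfolding L1_limit_of_continuous_def
proof (intro allI impI)
  fix e :: real assume "0 < e"
  have "(\<lambda>i. LINT x|lborel. \<bar>s i x - f x\<bar>) \<longlonglongrightarrow> integral\<^sup>L lborel (\<lambda>x::'a. 0::real)"
  proof (rule integral_dominated_convergence[where w="\<lambda>x. 3 * \<bar>f x\<bar>"])
    show "AE x in lborel. (\<lambda>i. \<bar>s i x - f x\<bar>) \<longlonglongrightarrow> 0"
      using lim by (intro AE_I2) (simp add: LIM_zero_iff tendsto_rabs_zero_iff)
    show "AE x in lborel. norm \<bar>s i x - f x\<bar> \<le> 3 * \<bar>f x\<bar>" for i
      using bound[of i] by (intro AE_I2) (smt (verit) real_norm_def)
  qed (use s_int f_int in auto)
  then have "(\<lambda>i. LINT x|lborel. \<bar>s i x - f x\<bar>) \<longlonglongrightarrow> 0"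
    by simp
  then have "\<forall>\<^sub>F i in sequentially. (LINT x|lborel. \<bar>s i x - f x\<bar>) < e / 2"
    by (rule order_tendstoD(2)) (use \<open>0 < e\<close> in simp)
  then obtain i where i: "(LINT x|lborel. \<bar>s i x - f x\<bar>) < e / 2"
    by (meson eventually_sequentially order_refl)
  obtain h where h: "continuous_on UNIV h" "integrable lborel (\<lambda>x. s i x - h x)"
      "(LINT x|lborel. \<bar>s i x - h x\<bar>) < e / 2"
    using s[of i] \<open>0 < e\<close> unfolding L1_limit_of_continuous_def by (meson half_gt_zero)
  have si_f: "integrable lborel (\<lambda>x. s i x - f x)"
    using s_int f_int by simp
  have f_h: "integrable lborel (\<lambda>x. f x - h x)"
    using Bochner_Integration.integrable_diff[OF h(2) si_f] by simp
  have "(LINT x|lborel. \<bar>f x - h x\<bar>) \<le> (LINT x|lborel. \<bar>s i x - f x\<bar> + \<bar>s i x - h x\<bar>)"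
    by (rule Bochner_Integration.integral_mono) (use f_h si_f h(2) in auto)
  also have "\<dots> < e"
    using si_f h(2) i h(3) by simp
  finally show "\<exists>h. continuous_on UNIV h \<and> integrable lborel (\<lambda>x. f x - h x) \<and>
      (LINT x|lborel. \<bar>f x - h x\<bar>) < e"
    using h f_h by blast
qed

lemma integrable_imp_L1_limit_of_continuous:
  fixes g :: "'a::euclidean_space \<Rightarrow> real"
  assumes "integrable lborel g"
  shows "L1_limit_of_continuous g"
  using assms
proof induct
  case (base A c)
  then show ?case
    using L1_limit_of_continuous_indicator[of A c] by simp
next
  case (add f g)
  then show ?case
    by (intro L1_limit_of_continuous_add) auto
next
  case (lim f s)
  then show ?case
    by (intro L1_limit_of_continuous_lim[of s f]) auto
qed

section \<open>Averages over balls\<close>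

lemma measure_lborel_ball_center:
  "measure lborel (ball (x::'a::euclidean_space) r) = measure lborel (ball (0::'a) r)"
  by (cases "0 \<le> r") (simp_all add: content_ball ball_empty)

lemma borel_measurable_indicator_ball_pair [measurable]:
  "(\<lambda>p::'a::euclidean_space \<times> 'a. indicator (ball (fst p) r) (snd p) :: real)
     \<in> borel_measurable (lborel \<Otimes>\<^sub>M lborel)"
proof -
  have "{p::'a \<times> 'a. dist (fst p) (snd p) < r} \<in> sets (borel \<Otimes>\<^sub>M borel)"
    unfolding borel_prod by (intro borel_open open_Collect_less continuous_intros)
  then show ?thesis
    by (simp add: indicator_def mem_ball)
qed

lemma
  fixes f :: "'a::euclidean_space \<Rightarrow> real"
  assumes f [measurable]: "integrable lborel f"
  shows integrable_ball_average: "integrable lborel (\<lambda>x. LINT y:ball x r|lborel. f y)"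
    and integral_ball_average:
      "(LINT x|lborel. (LINT y:ball x r|lborel. f y))
         = measure lborel (ball (0::'a) r) * integral\<^sup>L lborel f"
proof -
  define G where "G p = indicator (ball (fst p) r) (snd p) * f (fst p)" for p :: "'a \<times> 'a"
  have ball_fin: "emeasure lborel (ball y r) < \<infinity>" for y :: 'a
    by (rule emeasure_lborel_ball_finite)
  have inner: "(LINT x|lborel. G (y, x)) = measure lborel (ball (0::'a) r) * f y" for y
    using ball_fin[of y] by (simp add: G_def measure_lborel_ball_center[of y])
  have G_int: "integrable (lborel \<Otimes>\<^sub>M lborel) G"
  proof (rule lborel_pair.Fubini_integrable)
    show "G \<in> borel_measurable (lborel \<Otimes>\<^sub>M lborel)"
      unfolding G_def by measurable
    have "(LINT x|lborel. norm (G (y, x))) = measure lborel (ball (0::'a) r) * \<bar>f y\<bar>" for y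
      using ball_fin[of y] by (simp add: G_def abs_mult measure_lborel_ball_center[of y])
    then show "integrable lborel (\<lambda>y. LINT x|lborel. norm (G (y, x)))"
      using f by (simp only:) (intro integrable_mult_right integrable_abs)
    show "AE y in lborel. integrable lborel (\<lambda>x. G (y, x))"
      using ball_fin by (simp add: G_def)
  qed
  have swap: "(LINT y|lborel. G (y, x)) = (LINT y:ball x r|lborel. f y)" for x
    unfolding set_lebesgue_integral_def G_def
    by (intro Bochner_Integration.integral_cong) (auto simp: indicator_def dist_commute)
  have G'_int: "integrable (lborel \<Otimes>\<^sub>M lborel) (\<lambda>(x, y). G (y, x))"
    using lborel_pair.integrable_product_swap[OF G_int] .
  show "integrable lborel (\<lambda>x. LINT y:ball x r|lborel. f y)"
    using lborel_pair.integrable_fst'[OF G'_int] by (simp add: swap)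
  have "(LINT x|lborel. (LINT y:ball x r|lborel. f y))
      = integral\<^sup>L (lborel \<Otimes>\<^sub>M lborel) (\<lambda>(x, y). G (y, x))"
    using lborel_pair.integral_fst'[OF G'_int] by (simp add: swap)
  also have "\<dots> = integral\<^sup>L (lborel \<Otimes>\<^sub>M lborel) G"
    using G_int by (intro lborel_pair.integral_product_swap) auto
  also have "\<dots> = (LINT y|lborel. measure lborel (ball (0::'a) r) * f y)"
    using lborel_pair.integral_fst'[OF G_int] by (simp add: inner)
  finally show "(LINT x|lborel. (LINT y:ball x r|lborel. f y))
      = measure lborel (ball (0::'a) r) * integral\<^sup>L lborel f"
    by simp
qed

lemma abs_ball_integral_oscillation_le:
  fixes F h :: "'a::euclidean_space \<Rightarrow> real"
  assumes F_int: "integrable lborel F" and Fh_int: "integrable lborel (\<lambda>y. F y * h y)"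
    and F_bound: "\<And>y. \<bar>F y\<bar> \<le> M" and F_supp: "\<And>y. y \<notin> S \<Longrightarrow> F y = 0"
    and h_osc: "\<And>y. y \<in> S \<Longrightarrow> dist x y < \<epsilon> \<Longrightarrow> \<bar>h x - h y\<bar> \<le> \<eta>" and "0 \<le> \<eta>"
  shows "\<bar>h x * (LINT y:ball x \<epsilon>|lborel. F y) - (LINT y:ball x \<epsilon>|lborel. F y * h y)\<bar>
           \<le> M * \<eta> * measure lborel (ball x \<epsilon>)"
proof -
  define D where "D y = h x * F y - F y * h y" for y
  have "0 \<le> M"
    using F_bound[of x] by linarith
  have bound: "\<bar>indicator (ball x \<epsilon>) y * D y\<bar> \<le> M * \<eta> * indicator (ball x \<epsilon>) y" for y
  proof (cases "y \<in> ball x \<epsilon> \<and> y \<in> S")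
    case True
    then have "\<bar>h x - h y\<bar> \<le> \<eta>"
      by (intro h_osc) auto
    with True F_bound[of y] show ?thesis
      by (simp add: D_def abs_mult mult_mono' flip: right_diff_distrib mult.commute[of "F y"])
  qed (use F_supp \<open>0 \<le> M\<close> \<open>0 \<le> \<eta>\<close> in \<open>auto simp: D_def indicator_def\<close>)
  have hF: "set_integrable lborel (ball x \<epsilon>) (\<lambda>y. h x * F y)"
    unfolding set_integrable_def by (rule integrable_mult_indicator) (use F_int in auto)
  have Fh: "set_integrable lborel (ball x \<epsilon>) (\<lambda>y. F y * h y)"
    unfolding set_integrable_def by (rule integrable_mult_indicator) (use Fh_int in auto)
  have D_int: "set_integrable lborel (ball x \<epsilon>) D"
    unfolding D_def using hF Fh by (rule set_integral_diff(1))
  have "h x * (LINT y:ball x \<epsilon>|lborel. F y) - (LINT y:ball x \<epsilon>|lborel. F y * h y)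
      = (LINT y:ball x \<epsilon>|lborel. D y)"
    unfolding D_def using hF Fh by simp
  also have "\<dots> = (LINT y|lborel. indicator (ball x \<epsilon>) y * D y)"
    by (simp add: set_lebesgue_integral_def)
  also have "\<bar>\<dots>\<bar> \<le> (LINT y|lborel. M * \<eta> * indicator (ball x \<epsilon>) y)"
  proof (rule integral_abs_bound_integral)
    show "integrable lborel (\<lambda>y. M * \<eta> * indicator (ball x \<epsilon>) y)"
      using emeasure_lborel_ball_finite by (intro integrable_mult_right integrable_real_indicator) auto
    show "integrable lborel (\<lambda>y. indicator (ball x \<epsilon>) y * D y)"
      using D_int by (simp add: set_integrable_def)
  qed (rule bound)
  also have "\<dots> = M * \<eta> * measure lborel (ball x \<epsilon>)"
    using emeasure_lborel_ball_finite[of x \<epsilon>] by simp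
  finally show ?thesis .
qed

lemma abs_integral_mult_le_by_ball_averages:
  fixes F h u w :: "'a::euclidean_space \<Rightarrow> real"
  assumes F_int: "integrable lborel F" and Fh_int: "integrable lborel (\<lambda>y. F y * h y)"
    and h [measurable]: "h \<in> borel_measurable lborel"
    and u: "integrable lborel u" "\<And>x. \<bar>h x * (LINT y:ball x r|lborel. F y)\<bar> \<le> u x"
    and w: "integrable lborel w"
      "\<And>x. \<bar>h x * (LINT y:ball x r|lborel. F y) - (LINT y:ball x r|lborel. F y * h y)\<bar> \<le> w x"
  shows "measure lborel (ball (0::'a) r) * \<bar>LINT y|lborel. F y * h y\<bar>
           \<le> integral\<^sup>L lborel u + integral\<^sup>L lborel w"
proof -
  define I where "I x = (LINT y:ball x r|lborel. F y)" for x
  define J where "J x = (LINT y:ball x r|lborel. F y * h y)" for x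
  have J_int: "integrable lborel J"
    unfolding J_def by (rule integrable_ball_average[OF Fh_int])
  have u_bound: "\<bar>h x * I x\<bar> \<le> u x" and w_bound: "\<bar>h x * I x - J x\<bar> \<le> w x" for x
    unfolding I_def J_def by (fact u(2) w(2))+
  have hI_int: "integrable lborel (\<lambda>x. h x * I x)"
  proof (rule Bochner_Integration.integrable_bound[OF u(1)])
    show "AE x in lborel. norm (h x * I x) \<le> norm (u x)"
      using u_bound by (intro AE_I2) (auto intro: order_trans[OF _ abs_ge_self])
    show "(\<lambda>x. h x * I x) \<in> borel_measurable lborel"
      using integrable_ball_average[OF F_int, of r] unfolding I_def by measurable
  qed
  have "measure lborel (ball (0::'a) r) * \<bar>LINT y|lborel. F y * h y\<bar> = \<bar>LINT x|lborel. J x\<bar>"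
    unfolding J_def integral_ball_average[OF Fh_int] by (simp add: abs_mult)
  also have "\<dots> = \<bar>(LINT x|lborel. h x * I x) - (LINT x|lborel. h x * I x - J x)\<bar>"
    using hI_int J_int by simp
  also have "\<dots> \<le> \<bar>LINT x|lborel. h x * I x\<bar> + \<bar>LINT x|lborel. h x * I x - J x\<bar>"
    by linarith
  also have "\<dots> \<le> integral\<^sup>L lborel u + integral\<^sup>L lborel w"
  proof (rule add_mono)
    show "\<bar>LINT x|lborel. h x * I x\<bar> \<le> integral\<^sup>L lborel u"
      by (rule integral_abs_bound_integral) (use hI_int u(1) u_bound in auto)
    show "\<bar>LINT x|lborel. h x * I x - J x\<bar> \<le> integral\<^sup>L lborel w"
      by (rule integral_abs_bound_integral[where f="\<lambda>x. h x * I x - J x"])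
        (use hI_int J_int w(1) w_bound in auto)
  qed
  finally show ?thesis .
qed

lemma abs_integral_mult_le_local_averages:
  fixes F h :: "'a::euclidean_space \<Rightarrow> real"
  assumes F [measurable]: "F \<in> borel_measurable lborel"
    and F_bound: "\<And>y. \<bar>F y\<bar> \<le> M"
    and F_supp: "\<And>y. y \<notin> cball 0 1 \<Longrightarrow> F y = 0"
    and h_cont: "continuous_on UNIV h"
    and \<epsilon>: "0 < \<epsilon>" "\<epsilon> \<le> 1"
    and h_osc: "\<And>x y. y \<in> cball 0 1 \<Longrightarrow> dist x y < \<epsilon> \<Longrightarrow> \<bar>h x - h y\<bar> \<le> \<eta>"
    and averages: "\<And>x. \<bar>LINT y:ball x \<epsilon>|lborel. F y\<bar> \<le> K * measure lborel (ball x \<epsilon>)"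
  shows "\<bar>LINT y|lborel. F y * h y\<bar>
           \<le> M * \<eta> * measure lborel (cball (0::'a) 2) + K * (LINT x|lborel. indicator (cball 0 2) x * \<bar>h x\<bar>)"
proof -
  define V where "V = measure lborel (ball (0::'a) \<epsilon>)"
  define H where "H x = indicator (cball 0 2) x * \<bar>h x\<bar>" for x :: 'a
  have V_ball: "measure lborel (ball x \<epsilon>) = V" for x :: 'a
    unfolding V_def by (rule measure_lborel_ball_center)
  have \<eta>: "0 \<le> \<eta>"
    using h_osc[of 0 0] \<epsilon> by simp
  have H_int: "integrable lborel H"
    unfolding H_def
    using borel_integrable_compact[OF compact_cball, where f="\<lambda>x. \<bar>h x\<bar>"] continuous_on_subset[OF h_cont]
    by (auto intro: continuous_on_rabs)
  have F_int: "integrable lborel F"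
    by (rule integrable_bounded_by_indicator[where A="cball 0 1" and B=M])
      (use F_bound F_supp emeasure_lborel_cball_finite in \<open>auto simp: indicator_def\<close>)
  have Fh_int: "integrable lborel (\<lambda>y. F y * h y)"
    using F_bound F_supp h_cont by (intro integrable_mult_continuous_compact_support[where S="cball 0 1"]) auto
  have far: "(LINT y:ball x \<epsilon>|lborel. F y) = 0" "(LINT y:ball x \<epsilon>|lborel. F y * h y) = 0"
    if "x \<notin> cball 0 2" for x
  proof -
    have "F y = 0" if "y \<in> ball x \<epsilon>" for y
      using that \<open>x \<notin> cball 0 2\<close> \<epsilon> F_supp norm_triangle_ineq2[of x y] by (auto simp: dist_norm)
    then show "(LINT y:ball x \<epsilon>|lborel. F y) = 0" "(LINT y:ball x \<epsilon>|lborel. F y * h y) = 0"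
      unfolding set_lebesgue_integral_def by (auto intro!: integral_eq_zero_AE AE_I2 simp: indicator_def)
  qed
  have "V * \<bar>LINT y|lborel. F y * h y\<bar>
      \<le> (LINT x|lborel. K * V * H x) + (LINT x|lborel. M * \<eta> * V * indicator (cball (0::'a) 2) x)"
  proof (rule abs_integral_mult_le_by_ball_averages[OF F_int Fh_int, where r=\<epsilon>, folded V_def])
    show "\<bar>h x * (LINT y:ball x \<epsilon>|lborel. F y)\<bar> \<le> K * V * H x" for x
    proof (cases "x \<in> cball 0 2")
      case True
      then show ?thesis
        using mult_left_mono[OF averages[of x], of "\<bar>h x\<bar>"] by (simp add: H_def V_ball abs_mult mult_ac)
    qed (simp add: H_def far)
    show "\<bar>h x * (LINT y:ball x \<epsilon>|lborel. F y) - (LINT y:ball x \<epsilon>|lborel. F y * h y)\<bar>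
        \<le> M * \<eta> * V * indicator (cball 0 2) x" for x
    proof (cases "x \<in> cball 0 2")
      case True
      have "\<bar>h x * (LINT y:ball x \<epsilon>|lborel. F y) - (LINT y:ball x \<epsilon>|lborel. F y * h y)\<bar>
          \<le> M * \<eta> * measure lborel (ball x \<epsilon>)"
        by (rule abs_ball_integral_oscillation_le[where S="cball 0 1"])
          (use F_int Fh_int F_bound F_supp h_osc \<eta> in auto)
      with True show ?thesis
        by (simp add: V_ball)
    qed (simp add: far)
  qed (use H_int emeasure_lborel_cball_finite[of "0::'a" 2] borel_measurable_continuous_onI[OF h_cont]
       in auto)
  also have "\<dots> = V * (M * \<eta> * measure lborel (cball (0::'a) 2) + K * (LINT x|lborel. H x))"
    using emeasure_lborel_cball_finite[of "0::'a" 2] by (simp add: algebra_simps)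
  finally show ?thesis
    using \<epsilon> by (simp add: V_def H_def mult_le_cancel_left_pos)
qed

section \<open>The flow\<close>

definition twist :: "real \<Rightarrow> complex \<Rightarrow> complex" where
  "twist a x = x * cis (a * norm x)"

lemma twist_neg_twist [simp]: "twist (-a) (twist a x) = x"
  by (simp add: twist_def norm_mult mult.assoc cis_mult)

lemma continuous_on_twist: "continuous_on UNIV (twist a)"
  unfolding twist_def by (intro continuous_intros)

lemma norm_cis_diff_le: "norm (cis s - cis r) \<le> \<bar>s - r\<bar>"
proof -
  have "cis s - cis r = cis r * (cis (s - r) - 1)"
    by (simp add: algebra_simps cis_mult)
  then have "norm (cis s - cis r) = norm (exp (\<i> * complex_of_real (s - r)) - 1)"
    by (simp add: norm_mult cis_conv_exp)
  also have "\<dots> = 2 * \<bar>sin ((s - r) / 2)\<bar>"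
    by (rule dist_exp_i_1)
  also have "\<dots> \<le> \<bar>s - r\<bar>"
    using abs_sin_x_le_abs_x[of "(s - r) / 2"] by simp
  finally show ?thesis .
qed

lemma norm_twist_diff_le: "norm (twist a y - twist a x) \<le> (1 + \<bar>a\<bar> * norm x) * norm (y - x)"
proof -
  have "twist a y - twist a x = (y - x) * cis (a * norm y) + x * (cis (a * norm y) - cis (a * norm x))"
    by (simp add: twist_def algebra_simps)
  then have "norm (twist a y - twist a x)
      \<le> norm (y - x) + norm x * norm (cis (a * norm y) - cis (a * norm x))"
    by (metis norm_cis norm_mult mult.right_neutral norm_triangle_ineq)
  moreover have "norm (cis (a * norm y) - cis (a * norm x)) \<le> \<bar>a\<bar> * norm (y - x)"
    using norm_cis_diff_le[of "a * norm y" "a * norm x"] norm_triangle_ineq3[of y x]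
    by (simp add: abs_mult flip: right_diff_distrib) (meson abs_ge_zero mult_left_mono order_trans)
  then have "norm x * norm (cis (a * norm y) - cis (a * norm x)) \<le> norm x * (\<bar>a\<bar> * norm (y - x))"
    by (simp add: mult_left_mono)
  ultimately show ?thesis
    by (simp add: algebra_simps)
qed

lemma AE_twist:
  assumes "AE x in lborel. P x"
  shows "AE x in lborel. P (twist a x)"
proof -
  obtain N where N: "{x. \<not> P x} \<subseteq> N" "N \<in> null_sets lborel"
    using assms by (auto simp: eventually_ae_filter)
  have "{x. twist a x \<in> N} = twist (-a) ` N"
    using twist_neg_twist[of "-a"] by (auto simp: image_iff) (metis twist_neg_twist)
  moreover have "negligible (twist (-a) ` N)"
  proof (rule negligible_locally_Lipschitz_image)
    show "negligible N"
      using N(2) by (simp add: negligible_iff_null_sets null_sets_completionI)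
    show "\<exists>T B. open T \<and> x \<in> T \<and> (\<forall>y\<in>N \<inter> T. norm (twist (-a) y - twist (-a) x) \<le> B * norm (y - x))"
      if "x \<in> N" for x
      using norm_twist_diff_le[of "-a"] by (intro exI[of _ UNIV] exI[of _ "1 + \<bar>a\<bar> * norm x"]) auto
  qed simp
  ultimately have "{x. twist a x \<in> N} \<in> null_sets lebesgue"
    by (simp add: negligible_iff_null_sets)
  then have "AE x in lebesgue. P (twist a x)"
    by (rule AE_I') (use N in auto)
  then show ?thesis
    by (simp add: AE_completion_iff)
qed

lemma sol_eq_twist: "sol rho0 t = rho0 \<circ> twist (2 * pi * t)"
  by (simp add: sol_def twist_def fun_eq_iff)

lemma borel_measurable_sol [measurable]:
  assumes "rho0 \<in> borel_measurable lborel"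
  shows "sol rho0 t \<in> borel_measurable lborel"
  unfolding sol_eq_twist
  using borel_measurable_continuous_onI[OF continuous_on_twist] assms
  by (auto intro: measurable_comp)

lemma sol_bounded_representative:
  assumes meas: "rho0 \<in> borel_measurable lborel" and "AE x in lborel. \<bar>rho0 x\<bar> \<le> C"
  obtains rho1 where "rho1 \<in> borel_measurable lborel" "\<And>t x. \<bar>sol rho1 t x\<bar> \<le> \<bar>C\<bar>"
    "\<And>t. AE x in lborel. sol rho0 t x = sol rho1 t x"
proof
  define rho1 where "rho1 x = max (- C) (min C (rho0 x))" for x
  show "rho1 \<in> borel_measurable lborel"
    unfolding rho1_def using meas by measurable
  show "\<bar>sol rho1 t x\<bar> \<le> \<bar>C\<bar>" for t x
    by (auto simp: sol_def rho1_def)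
  have rho_ae: "AE x in lborel. rho0 x = rho1 x"
    using assms(2) by eventually_elim (auto simp: rho1_def)
  show "AE x in lborel. sol rho0 t x = sol rho1 t x" for t
    using AE_twist[OF rho_ae, of "2 * pi * t"] by (simp add: sol_eq_twist)
qed

section \<open>Essential supremum and mixing scale\<close>

lemma Linf_B1_bound_nonneg:
  fixes f :: "complex \<Rightarrow> real"
  assumes "AE x in lborel. x \<in> ball 0 1 \<longrightarrow> \<bar>f x\<bar> \<le> C"
  shows "0 \<le> C"
proof (rule ccontr)
  assume "\<not> 0 \<le> C"
  have "AE x in lborel. x \<notin> ball (0::complex) 1"
    using assms by (rule eventually_mono) (use \<open>\<not> 0 \<le> C\<close> in auto)
  then have "emeasure lborel (ball (0::complex) 1) = 0"
    by (subst (asm) AE_iff_measurable[of "ball 0 1"]) auto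
  then show False
    by (simp add: emeasure_ball unit_ball_vol_2)
qed

lemma
  fixes f :: "complex \<Rightarrow> real"
  assumes "AE x in lborel. \<bar>f x\<bar> \<le> M"
  shows Linf_B1_le: "Linf_B1 f \<le> M"
    and Linf_B1_nonneg: "0 \<le> Linf_B1 f"
proof -
  let ?S = "{C. AE x in lborel. x \<in> ball 0 1 \<longrightarrow> \<bar>f x\<bar> \<le> C}"
  have M: "M \<in> ?S"
    using assms by (auto elim!: eventually_mono)
  have nonneg: "C \<in> ?S \<Longrightarrow> 0 \<le> C" for C
    using Linf_B1_bound_nonneg[of f C] by simp
  show "Linf_B1 f \<le> M"
    unfolding Linf_B1_def by (rule cInf_lower[OF M bdd_belowI[OF nonneg]])
  show "0 \<le> Linf_B1 f"
    unfolding Linf_B1_def using M nonneg by (intro cInf_greatest) blast+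
qed

lemma AE_abs_le_Linf_B1:
  assumes "AE x in lborel. \<bar>f x\<bar> \<le> M"
  shows "AE x in lborel. x \<in> ball 0 1 \<longrightarrow> \<bar>f x\<bar> \<le> Linf_B1 f"
proof -
  let ?S = "{C. AE x in lborel. x \<in> ball 0 1 \<longrightarrow> \<bar>f x\<bar> \<le> C}"
  have "?S \<noteq> {}"
    using assms by (auto elim!: eventually_mono)
  have "AE x in lborel. x \<in> ball 0 1 \<longrightarrow> \<bar>f x\<bar> \<le> Linf_B1 f + 1 / Suc n" for n :: nat
  proof -
    obtain C where "C \<in> ?S" "C < Linf_B1 f + 1 / Suc n"
      using cInf_lessD[OF \<open>?S \<noteq> {}\<close>, of "Linf_B1 f + 1 / Suc n"] unfolding Linf_B1_def by auto
    then show ?thesis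
      by (auto elim!: eventually_mono)
  qed
  then have "AE x in lborel. \<forall>n::nat. x \<in> ball 0 1 \<longrightarrow> \<bar>f x\<bar> \<le> Linf_B1 f + 1 / Suc n"
    by (intro AE_all_countable[THEN iffD2] allI)
  then show ?thesis
  proof (rule eventually_mono, intro impI)
    fix x assume "\<forall>n::nat. x \<in> ball 0 1 \<longrightarrow> \<bar>f x\<bar> \<le> Linf_B1 f + 1 / Suc n" "x \<in> ball 0 1"
    then have "\<bar>f x\<bar> \<le> Linf_B1 f + inverse (Suc n)" for n :: nat
      by (simp add: inverse_eq_divide)
    show "\<bar>f x\<bar> \<le> Linf_B1 f"
    proof (rule field_le_epsilon)
      fix e :: real assume "0 < e"
      then obtain n where "inverse (real (Suc n)) < e"
        using reals_Archimedean by blast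
      with \<open>\<bar>f x\<bar> \<le> Linf_B1 f + inverse (Suc n)\<close> show "\<bar>f x\<bar> \<le> Linf_B1 f + e"
        by linarith
    qed
  qed
qed

lemma Linf_B1_cong:
  assumes "AE x in lborel. f x = g x"
  shows "Linf_B1 f = Linf_B1 g"
proof -
  have "(AE x in lborel. x \<in> ball 0 1 \<longrightarrow> \<bar>f x\<bar> \<le> C) \<longleftrightarrow> (AE x in lborel. x \<in> ball 0 1 \<longrightarrow> \<bar>g x\<bar> \<le> C)" for C
    using assms by (auto elim!: eventually_rev_mp)
  then show ?thesis
    unfolding Linf_B1_def by simp
qed

lemma mix_scale_cong:
  fixes f g :: "complex \<Rightarrow> real"
  assumes [measurable]: "f \<in> borel_measurable lborel" "g \<in> borel_measurable lborel"
    and "AE x in lborel. f x = g x"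
  shows "mix_scale \<kappa> f = mix_scale \<kappa> g"
proof -
  have "(LINT y:ball x \<epsilon>|lborel. indicator (cball 0 1) y * f y) =
        (LINT y:ball x \<epsilon>|lborel. indicator (cball 0 1) y * g y)" for x \<epsilon>
    unfolding set_lebesgue_integral_def
    by (rule integral_cong_AE)
      (use assms in \<open>auto elim!: eventually_mono intro!: borel_measurable_times borel_measurable_indicator\<close>)
  then show ?thesis
    unfolding mix_scale_def Linf_B1_cong[OF assms(3)] by simp
qed

lemma abs_set_integral_cball_le_Linf_B1:
  fixes f :: "complex \<Rightarrow> real"
  assumes [measurable]: "f \<in> borel_measurable lborel" "A \<in> sets lborel"
    and bound: "\<And>y. \<bar>f y\<bar> \<le> M"
  shows "\<bar>LINT y:A|lborel. indicator (cball 0 1) y * f y\<bar> \<le> pi * Linf_B1 f"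
proof -
  have bound_AE: "AE y in lborel. \<bar>f y\<bar> \<le> M"
    using bound by simp
  have AE_bound: "AE y in lborel. \<bar>indicator A y * (indicator (cball 0 1) y * f y)\<bar>
                    \<le> Linf_B1 f * indicator (cball (0::complex) 1) y"
  proof -
    have "AE y in lborel. y \<notin> sphere (0::complex) 1"
      using negligible_sphere[of "0::complex" 1]
      by (intro AE_not_in) (auto simp: negligible_iff_null_sets null_sets_completion_iff)
    with AE_abs_le_Linf_B1[OF bound_AE] show ?thesis
    proof eventually_elim
      case (elim y)
      with bound[of y] Linf_B1_nonneg[OF bound_AE] show ?case
        by (auto simp: indicator_def abs_mult)
    qed
  qed
  have "\<bar>LINT y:A|lborel. indicator (cball 0 1) y * f y\<bar>
      \<le> (LINT y|lborel. \<bar>indicator A y * (indicator (cball 0 1) y * f y)\<bar>)"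
    unfolding set_lebesgue_integral_def using integral_norm_bound by (simp del: real_norm_def)
  also have "\<dots> \<le> (LINT y|lborel. Linf_B1 f * indicator (cball (0::complex) 1) y)"
  proof (rule integral_mono_AE[OF _ _ AE_bound])
    show "integrable lborel (\<lambda>y. Linf_B1 f * indicator (cball (0::complex) 1) y)"
      using emeasure_lborel_cball_finite[of "0::complex" 1]
      by (intro integrable_mult_right integrable_real_indicator) auto
    show "integrable lborel (\<lambda>y. \<bar>indicator A y * (indicator (cball 0 1) y * f y)\<bar>)"
      using emeasure_lborel_cball_finite[of "0::complex" 1] bound
      by (intro integrable_bounded_by_indicator[where A="cball 0 1" and B=M])
        (auto simp: indicator_def intro: order_trans[OF abs_ge_zero bound])
  qed
  also have "\<dots> = pi * Linf_B1 f"
    using emeasure_lborel_cball_finite[of "0::complex" 1]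
    by (simp add: measure_def emeasure_cball unit_ball_vol_2)
  finally show ?thesis .
qed

lemma measure_ball_complex: "0 \<le> r \<Longrightarrow> measure lborel (ball (c::complex) r) = pi * r\<^sup>2"
  by (simp add: content_ball unit_ball_vol_2)

lemma mix_scale_radius:
  fixes f :: "complex \<Rightarrow> real"
  assumes [measurable]: "f \<in> borel_measurable lborel"
    and bound: "\<And>y. \<bar>f y\<bar> \<le> M"
    and \<kappa>: "0 < \<kappa>" "\<kappa> \<le> 1"
    and "mix_scale \<kappa> f < \<delta>"
  obtains \<epsilon> where "0 < \<epsilon>" "\<epsilon> < \<delta>"
    "\<And>x. \<bar>LINT y:ball x \<epsilon>|lborel. indicator (cball 0 1) y * f y\<bar>
            \<le> \<kappa> * Linf_B1 f * measure lborel (ball x \<epsilon>)"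
proof -
  let ?S = "{\<epsilon>. \<epsilon> > 0 \<and> (\<forall>x. \<bar>(1 / measure lborel (ball x \<epsilon>)) *
       (LINT y:ball x \<epsilon>|lborel. indicator (cball 0 1) y * f y)\<bar> \<le> \<kappa> * Linf_B1 f)}"
  \<comment> \<open>The admissible radii are nonempty, so \<open>Inf\<close> is not a junk value: the total mass is at most
      \<open>pi * Linf_B1 f\<close> and a ball of radius \<open>1/\<kappa>\<close> has area \<open>pi/\<kappa>\<^sup>2\<close>.\<close>
  have "1 / \<kappa> \<in> ?S"
  proof (intro CollectI conjI allI)
    fix x :: complex
    have L: "0 \<le> Linf_B1 f"
      using bound by (intro Linf_B1_nonneg[of f M]) simp
    have I: "\<bar>LINT y:ball x (1 / \<kappa>)|lborel. indicator (cball 0 1) y * f y\<bar> \<le> pi * Linf_B1 f"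
      by (rule abs_set_integral_cball_le_Linf_B1[where M=M]) (use bound in auto)
    have "\<bar>(1 / measure lborel (ball x (1 / \<kappa>))) *
            (LINT y:ball x (1 / \<kappa>)|lborel. indicator (cball 0 1) y * f y)\<bar>
        = (\<kappa>\<^sup>2 / pi) * \<bar>LINT y:ball x (1 / \<kappa>)|lborel. indicator (cball 0 1) y * f y\<bar>"
      using \<kappa> by (simp add: measure_ball_complex abs_mult power_divide)
    also have "\<dots> \<le> (\<kappa>\<^sup>2 / pi) * (pi * Linf_B1 f)"
      using I by (intro mult_left_mono) auto
    also have "\<dots> \<le> \<kappa> * Linf_B1 f"
      using \<kappa> L mult_left_le_one_le[of "Linf_B1 f" \<kappa>]
      by (simp add: power2_eq_square mult.assoc mult_left_mono)
    finally show "\<bar>(1 / measure lborel (ball x (1 / \<kappa>))) *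
            (LINT y:ball x (1 / \<kappa>)|lborel. indicator (cball 0 1) y * f y)\<bar> \<le> \<kappa> * Linf_B1 f" .
  qed (use \<kappa> in simp)
  then obtain \<epsilon> where "\<epsilon> \<in> ?S" "\<epsilon> < \<delta>"
    using cInf_lessD[of ?S \<delta>] assms(5) unfolding mix_scale_def by blast
  moreover have "\<bar>LINT y:ball x \<epsilon>|lborel. indicator (cball 0 1) y * f y\<bar>
            \<le> \<kappa> * Linf_B1 f * measure lborel (ball x \<epsilon>)" if "\<epsilon> \<in> ?S" for x
    using that by (auto simp: measure_ball_complex abs_mult field_simps)
  ultimately show ?thesis
    using that by blast
qed

section \<open>Weak convergence\<close>

lemma abs_integral_mult_le_if_mix_scale_small:
  fixes f G h :: "complex \<Rightarrow> real"
  assumes f_meas [measurable]: "f \<in> borel_measurable lborel" and f_bound: "\<And>y. \<bar>f y\<bar> \<le> M"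
    and \<kappa>: "0 < \<kappa>" "\<kappa> \<le> 1" and small: "mix_scale \<kappa> f < min \<delta> 1"
    and h: "continuous_on UNIV h"
    and h_osc: "\<And>x y. x \<in> cball 0 2 \<Longrightarrow> y \<in> cball 0 2 \<Longrightarrow> dist x y < \<delta> \<Longrightarrow> \<bar>h x - h y\<bar> \<le> \<eta>"
    and Gh: "integrable lborel (\<lambda>x. G x - h x)"
  shows "\<bar>LINT y|lborel. indicator (cball 0 1) y * f y * G y\<bar>
           \<le> M * \<eta> * measure lborel (cball (0::complex) 2)
             + \<kappa> * M * (LINT x|lborel. indicator (cball 0 2) x * \<bar>h x\<bar>)
             + M * (LINT y|lborel. \<bar>G y - h y\<bar>)"
proof -
  have M: "0 \<le> M"
    using f_bound[of 0] by linarith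
  obtain \<epsilon> where \<epsilon>: "0 < \<epsilon>" "\<epsilon> < min \<delta> 1" and averages:
    "\<And>x. \<bar>LINT y:ball x \<epsilon>|lborel. indicator (cball 0 1) y * f y\<bar>
            \<le> \<kappa> * Linf_B1 f * measure lborel (ball x \<epsilon>)"
    using mix_scale_radius[OF f_meas f_bound \<kappa> small] by blast
  have "Linf_B1 f \<le> M"
    using f_bound by (intro Linf_B1_le) simp
  then have "\<kappa> * Linf_B1 f * measure lborel (ball x \<epsilon>) \<le> (\<kappa> * M) * measure lborel (ball x \<epsilon>)" for x
    using \<kappa>(1) by (intro mult_right_mono mult_left_mono) auto
  with averages have averages': "\<bar>LINT y:ball x \<epsilon>|lborel. indicator (cball 0 1) y * f y\<bar>
            \<le> (\<kappa> * M) * measure lborel (ball x \<epsilon>)" for x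
    by (meson order_trans)
  have oscillation: "\<bar>h x - h y\<bar> \<le> \<eta>" if "y \<in> cball 0 1" "dist x y < \<epsilon>" for x y
  proof -
    have "x \<in> cball 0 2"
      using that \<epsilon> norm_triangle_ineq2[of x y] by (simp add: dist_norm)
    with that \<epsilon> show ?thesis
      by (intro h_osc) auto
  qed
  have "\<bar>LINT y|lborel. indicator (cball 0 1) y * f y * h y\<bar>
      \<le> M * \<eta> * measure lborel (cball (0::complex) 2)
        + \<kappa> * M * (LINT x|lborel. indicator (cball 0 2) x * \<bar>h x\<bar>)"
    using abs_integral_mult_le_local_averages[where F="\<lambda>y. indicator (cball 0 1) y * f y",
        OF _ _ _ h \<epsilon>(1) _ oscillation averages'] f_bound M \<epsilon>(2)
    by (simp add: abs_mult indicator_def)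
  moreover have "\<bar>LINT y|lborel. indicator (cball 0 1) y * f y * G y\<bar>
      \<le> \<bar>LINT y|lborel. indicator (cball 0 1) y * f y * h y\<bar> + M * (LINT y|lborel. \<bar>G y - h y\<bar>)"
  proof (rule abs_integral_mult_le_approx[OF _ _ _ Gh])
    show "integrable lborel (\<lambda>y. indicator (cball 0 1) y * f y * h y)"
      using f_bound M h
      by (intro integrable_mult_continuous_compact_support[where S="cball 0 1" and M=M])
        (auto simp: indicator_def)
  qed (use f_bound M in \<open>auto simp: indicator_def\<close>)
  ultimately show ?thesis
    by linarith
qed

lemma integral_mult_tendsto_zero_if_mixing:
  fixes f :: "real \<Rightarrow> complex \<Rightarrow> real" and G :: "complex \<Rightarrow> real"
  assumes f_meas: "\<And>t. f t \<in> borel_measurable lborel"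
    and f_bound: "\<And>t y. \<bar>f t y\<bar> \<le> M"
    and mixing: "\<And>\<kappa>. 0 < \<kappa> \<Longrightarrow> \<kappa> < 1 \<Longrightarrow> ((\<lambda>t. mix_scale \<kappa> (f t)) \<longlongrightarrow> 0) at_top"
    and G_int: "integrable lborel G"
  shows "((\<lambda>t. LINT y|lborel. indicator (cball 0 1) y * f t y * G y) \<longlongrightarrow> 0) at_top"
proof (rule tendsto_zero_if_eventually_abs_le_mult)
  fix e :: real assume e: "0 < e" "e < 1"
  have M: "0 \<le> M"
    using f_bound[of 0 0] by linarith
  obtain h where h: "continuous_on UNIV h" "integrable lborel (\<lambda>x. G x - h x)"
    "(LINT x|lborel. \<bar>G x - h x\<bar>) < e"
    using integrable_imp_L1_limit_of_continuous[OF G_int] e unfolding L1_limit_of_continuous_def by blast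
  define H where "H = (LINT x|lborel. indicator (cball (0::complex) 2) x * \<bar>h x\<bar>)"
  define \<kappa> where "\<kappa> = e / (H + 1)"
  have "0 \<le> H"
    unfolding H_def by (intro Bochner_Integration.integral_nonneg) auto
  then have \<kappa>: "0 < \<kappa>" "\<kappa> < 1" "\<kappa> * H \<le> e"
    using e by (auto simp: \<kappa>_def field_simps)
  have "uniformly_continuous_on (cball 0 2) h"
    using continuous_on_subset[OF h(1)] by (intro compact_uniformly_continuous) auto
  then obtain \<delta> where "0 < \<delta>"
    and \<delta>: "\<And>x y. x \<in> cball 0 2 \<Longrightarrow> y \<in> cball 0 2 \<Longrightarrow> dist y x < \<delta> \<Longrightarrow> dist (h y) (h x) < e"
    using e unfolding uniformly_continuous_on_def by metis
  have osc: "\<bar>h x - h y\<bar> \<le> e" if "x \<in> cball 0 2" "y \<in> cball 0 2" "dist x y < \<delta>" for x y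
    using \<delta>[OF that(2,1)] that(3) by (simp add: dist_commute dist_real_def)
  have "eventually (\<lambda>t. mix_scale \<kappa> (f t) < min \<delta> 1) at_top"
    using mixing[OF \<kappa>(1,2)] \<open>0 < \<delta>\<close> by (intro order_tendstoD(2)) auto
  then show "eventually (\<lambda>t. \<bar>LINT y|lborel. indicator (cball 0 1) y * f t y * G y\<bar>
      \<le> M * (measure lborel (cball (0::complex) 2) + 2) * e) at_top"
  proof (rule eventually_mono)
    fix t assume "mix_scale \<kappa> (f t) < min \<delta> 1"
    from abs_integral_mult_le_if_mix_scale_small[OF f_meas f_bound \<kappa>(1) _ this h(1) osc h(2)] \<kappa>(2)
    have "\<bar>LINT y|lborel. indicator (cball 0 1) y * f t y * G y\<bar>
        \<le> M * e * measure lborel (cball (0::complex) 2) + \<kappa> * M * H + M * (LINT y|lborel. \<bar>G y - h y\<bar>)"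
      by (simp add: H_def)
    moreover have "M * (LINT y|lborel. \<bar>G y - h y\<bar>) \<le> M * e" "\<kappa> * M * H \<le> M * e"
      using h(3) \<kappa>(3) M by (simp_all add: mult_left_mono mult.commute[of \<kappa>] mult.assoc)
    ultimately show "\<bar>LINT y|lborel. indicator (cball 0 1) y * f t y * G y\<bar>
        \<le> M * (measure lborel (cball (0::complex) 2) + 2) * e"
      by (simp add: algebra_simps)
  qed
qed

theorem proposition4p1:
  fixes rho0 :: "complex \<Rightarrow> real"
  assumes meas: "rho0 \<in> borel_measurable lborel"
    and bdd: "\<exists>C. AE x in lborel. \<bar>rho0 x\<bar> \<le> C"
    and supp: "AE x in lborel. norm x > 1 \<longrightarrow> rho0 x = 0"
    and mix: "\<forall>\<kappa>. 0 < \<kappa> \<and> \<kappa> < 1 \<longrightarrow> ((\<lambda>t. mix_scale \<kappa> (sol rho0 t)) \<longlongrightarrow> 0) at_top"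
  shows "\<forall>g :: complex \<Rightarrow> real. g \<in> borel_measurable lborel \<and>
           set_integrable lborel (ball 0 1) (\<lambda>x. (g x)\<^sup>2) \<longrightarrow>
           ((\<lambda>t. LINT x:ball 0 1|lborel. sol rho0 t x * g x) \<longlongrightarrow> 0) at_top"
proof (intro allI impI)
  fix g :: "complex \<Rightarrow> real"
  assume g: "g \<in> borel_measurable lborel \<and> set_integrable lborel (ball 0 1) (\<lambda>x. (g x)\<^sup>2)"
  obtain C where C: "AE x in lborel. \<bar>rho0 x\<bar> \<le> C"
    using bdd by blast
  obtain rho1 where rho1: "rho1 \<in> borel_measurable lborel" "\<And>t x. \<bar>sol rho1 t x\<bar> \<le> \<bar>C\<bar>"
    and sol_ae: "\<And>t. AE x in lborel. sol rho0 t x = sol rho1 t x"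
    using sol_bounded_representative[OF meas C] by metis
  have "((\<lambda>t. LINT x|lborel. indicator (cball 0 1) x * sol rho1 t x * (indicator (ball 0 1) x * g x))
          \<longlongrightarrow> 0) at_top"
  proof (rule integral_mult_tendsto_zero_if_mixing[OF borel_measurable_sol[OF rho1(1)] rho1(2)])
    show "((\<lambda>t. mix_scale \<kappa> (sol rho1 t)) \<longlongrightarrow> 0) at_top" if "0 < \<kappa>" "\<kappa> < 1" for \<kappa>
      using mix that mix_scale_cong[OF borel_measurable_sol[OF meas] borel_measurable_sol[OF rho1(1)] sol_ae]
      by simp
    show "integrable lborel (\<lambda>x. indicator (ball 0 1) x * g x)"
      using g emeasure_lborel_ball_finite by (intro integrable_indicator_mult_if_square_integrable) auto
  qed
  moreover have "(LINT x:ball 0 1|lborel. sol rho0 t x * g x) =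
      (LINT x|lborel. indicator (cball 0 1) x * sol rho1 t x * (indicator (ball 0 1) x * g x))" for t
    unfolding set_lebesgue_integral_def
    by (rule integral_cong_AE)
      (use sol_ae[of t] g meas rho1(1) in \<open>auto simp: indicator_def elim!: eventually_mono\<close>)
  ultimately show "((\<lambda>t. LINT x:ball 0 1|lborel. sol rho0 t x * g x) \<longlongrightarrow> 0) at_top"
    by simp
qed

end
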